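(* Let $n\ge4$. The number of friendship parking functions for the cycle graph $C_n$ is $$|\mathrm{FPF}(C_n)| = n+1+\sum_{i=1}^{n-2}(i+1)(i+2)+\sum_{i=1}^{3}(n+1-i)!\,(i-1)!+\sum_{i=4}^{n}\frac{(n-i+1)!\,i!}{3}.$$
   Context: $C_n$ is the cycle graph with vertex set $[n]=\{1,\dots,n\}$ and edges $\{i,i+1\}$ for $i\in[n-1]$ and $\{n,1\}$. Friendship parking process for a graph $G$ on $[n]$ and a parking preference $p\in[n]^n$: cars $1,\dots,n$ enter in order into spots $1,\dots,n$ (initially empty); spot $k$ is available for car $i$ if it is unoccupied when $i$ enters and each of spots $k-1,k+1$ is unoccupied or occupied by a car adjacent to $i$ in $G$ (spots $0,n+1$ count as unoccupied); car $i$ parks in the first available spot $k\ge p_i$, and fails to park if there is none. $\mathrm{FPF}(G)$ is the set of parking preferences for which all $n$ cars park. *)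

theory Defs
  imports Complex_Main
begin

text \<open>A graph on [n] is given by an adjacency predicate on vertices.
 A parking state maps each spot to the car occupying it (None = empty).\<close>

definition cycle_graph :: "nat \<Rightarrow> nat \<Rightarrow> nat \<Rightarrow> bool" where
  "cycle_graph n i j \<longleftrightarrow> i \<in> {1..n} \<and> j \<in> {1..n} \<and>
     (j = i + 1 \<or> i = j + 1 \<or> (i = n \<and> j = 1) \<or> (i = 1 \<and> j = n))"

definition nbr_ok :: "(nat \<Rightarrow> nat \<Rightarrow> bool) \<Rightarrow> nat \<Rightarrow> (nat \<Rightarrow> nat option) \<Rightarrow> nat \<Rightarrow> nat \<Rightarrow> bool" where
  "nbr_ok G n occ i j \<longleftrightarrow> j = 0 \<or> j = n + 1 \<or>
     (case occ j of None \<Rightarrow> True | Some c \<Rightarrow> G i c)"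

definition available :: "(nat \<Rightarrow> nat \<Rightarrow> bool) \<Rightarrow> nat \<Rightarrow> (nat \<Rightarrow> nat option) \<Rightarrow> nat \<Rightarrow> nat \<Rightarrow> bool" where
  "available G n occ i k \<longleftrightarrow> k \<in> {1..n} \<and> occ k = None \<and>
     nbr_ok G n occ i (k - 1) \<and> nbr_ok G n occ i (k + 1)"

definition park_car :: "(nat \<Rightarrow> nat \<Rightarrow> bool) \<Rightarrow> nat \<Rightarrow> nat \<Rightarrow> nat \<Rightarrow> (nat \<Rightarrow> nat option) \<Rightarrow> (nat \<Rightarrow> nat option) option" where
  "park_car G n i a occ =
     (if \<exists>k. a \<le> k \<and> available G n occ i k
      then Some (occ((LEAST k. a \<le> k \<and> available G n occ i k) := Some i))
      else None)"

text \<open>State after cars 1..m entered; preference of car i is p ! (i-1).\<close>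
fun run :: "(nat \<Rightarrow> nat \<Rightarrow> bool) \<Rightarrow> nat \<Rightarrow> nat list \<Rightarrow> nat \<Rightarrow> (nat \<Rightarrow> nat option) option" where
  "run G n p 0 = Some (\<lambda>_. None)"
| "run G n p (Suc m) = (case run G n p m of None \<Rightarrow> None
      | Some occ \<Rightarrow> park_car G n (Suc m) (p ! m) occ)"

definition FPF :: "(nat \<Rightarrow> nat \<Rightarrow> bool) \<Rightarrow> nat \<Rightarrow> nat list set" where
  "FPF G n = {p. length p = n \<and> set p \<subseteq> {1..n} \<and> run G n p n \<noteq> None}"

end

theory Submission
  imports Defs
begin

text \<open>Record, for a preference list under which all cars park, the spot where each car ends up.
  Given that outcome, car i's choice is independent of the other cars' preferences: it is any
  preference between the last spot available to it before its final spot and that spot itself.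
  So the preferences with a given outcome form a product set, and FPF(G) is the disjoint union of
  these products over all possible outcomes. For an outcome, cars parked at neighbouring spots must
  be adjacent in G; for G = C_n this forces the cars, read along the spots, to run around the cycle
  from some car a, either upwards or downwards. For each of these 2n outcomes the number of
  admissible preferences of each car is read off explicitly; the upward outcomes give the
  factorial terms and the downward ones give n + 1 and the terms (i+1)(i+2).\<close>

section \<open>Outcomes of the parking process on an arbitrary graph\<close>

primrec parked :: "(nat \<Rightarrow> nat) \<Rightarrow> nat \<Rightarrow> nat \<Rightarrow> nat option" where
  "parked spot 0 = (\<lambda>_. None)"
| "parked spot (Suc m) = (parked spot m)(spot (Suc m) := Some (Suc m))"

definition prefs_parking_at ::
    "(nat \<Rightarrow> nat \<Rightarrow> bool) \<Rightarrow> nat \<Rightarrow> (nat \<Rightarrow> nat option) \<Rightarrow> nat \<Rightarrow> nat \<Rightarrow> nat set" where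
  "prefs_parking_at G n occ i s = {a. 1 \<le> a \<and> a \<le> s \<and> available G n occ i s \<and>
      (\<forall>k. a \<le> k \<and> k < s \<longrightarrow> \<not> available G n occ i k)}"

definition prefs_with_outcome :: "(nat \<Rightarrow> nat \<Rightarrow> bool) \<Rightarrow> nat \<Rightarrow> (nat \<Rightarrow> nat) \<Rightarrow> nat list set" where
  "prefs_with_outcome G n spot = {p. length p = n \<and>
      (\<forall>i<n. p ! i \<in> prefs_parking_at G n (parked spot i) (Suc i) (spot (Suc i)))}"

text \<open>The spot taken by car i; a junk value unless cars 1, ..., i - 1 have parked.\<close>

definition parking_outcome :: "(nat \<Rightarrow> nat \<Rightarrow> bool) \<Rightarrow> nat \<Rightarrow> nat list \<Rightarrow> nat \<Rightarrow> nat" where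
  "parking_outcome G n p i = (LEAST k. p ! (i - 1) \<le> k \<and> available G n (the (run G n p (i - 1))) i k)"

lemma Least_prefs_parking_at:
  assumes "a \<in> prefs_parking_at G n occ i s"
  shows "(LEAST k. a \<le> k \<and> available G n occ i k) = s"
proof (rule Least_equality)
  show "a \<le> s \<and> available G n occ i s"
    using assms by (auto simp: prefs_parking_at_def)
next
  fix k assume "a \<le> k \<and> available G n occ i k"
  with assms show "s \<le> k"
    unfolding prefs_parking_at_def by (metis (no_types, lifting) mem_Collect_eq not_le)
qed

lemma park_car_prefs_parking_at:
  assumes "a \<in> prefs_parking_at G n occ i s"
  shows "park_car G n i a occ = Some (occ(s := Some i))"
proof -
  have "a \<le> s \<and> available G n occ i s" using assms by (auto simp: prefs_parking_at_def)
  then show ?thesis unfolding park_car_def using Least_prefs_parking_at[OF assms] by auto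
qed

lemma prefs_parking_at_subset: "prefs_parking_at G n occ i s \<subseteq> {1..n}"
  by (auto simp: prefs_parking_at_def available_def)

lemma run_prefs_with_outcome:
  assumes "p \<in> prefs_with_outcome G n spot" "m \<le> n"
  shows "run G n p m = Some (parked spot m)"
  using assms(2)
proof (induction m)
  case (Suc m)
  have "p ! m \<in> prefs_parking_at G n (parked spot m) (Suc m) (spot (Suc m))"
    using assms(1) Suc.prems by (auto simp: prefs_with_outcome_def)
  then show ?case using Suc by (simp add: park_car_prefs_parking_at fun_upd_def)
qed simp

lemma prefs_with_outcome_subset_FPF: "prefs_with_outcome G n spot \<subseteq> FPF G n"
proof
  fix p assume p: "p \<in> prefs_with_outcome G n spot"
  then have "set p \<subseteq> {1..n}"
    using prefs_parking_at_subset by (fastforce simp: prefs_with_outcome_def in_set_conv_nth)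
  then show "p \<in> FPF G n"
    using p run_prefs_with_outcome[OF p, of n] by (auto simp: FPF_def prefs_with_outcome_def)
qed

lemma finite_FPF: "finite (FPF G n)"
proof (rule finite_subset)
  show "FPF G n \<subseteq> {xs. set xs \<subseteq> {1..n} \<and> length xs = n}" by (auto simp: FPF_def)
qed (simp add: finite_lists_length_eq)

lemma run_parking_outcome:
  assumes "run G n p m \<noteq> None" "\<forall>i<m. 1 \<le> p ! i"
  shows "run G n p m = Some (parked (parking_outcome G n p) m) \<and>
     (\<forall>i<m. p ! i \<in> prefs_parking_at G n (parked (parking_outcome G n p) i) (Suc i)
                        (parking_outcome G n p (Suc i)))"
  using assms
proof (induction m)
  case (Suc m)
  let ?spot = "parking_outcome G n p"
  obtain occ where occ: "run G n p m = Some occ"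
    using Suc.prems by (cases "run G n p m") auto
  have "run G n p m \<noteq> None" "\<forall>i<m. 1 \<le> p ! i" using occ Suc.prems(2) by simp_all
  from Suc.IH[OF this] have IH: "occ = parked ?spot m"
    "\<forall>i<m. p ! i \<in> prefs_parking_at G n (parked ?spot i) (Suc i) (?spot (Suc i))"
    using occ by simp_all
  have "park_car G n (Suc m) (p ! m) occ \<noteq> None" using Suc.prems occ by simp
  then have ex: "\<exists>k. p ! m \<le> k \<and> available G n occ (Suc m) k"
    unfolding park_car_def by (auto split: if_splits)
  have s: "?spot (Suc m) = (LEAST k. p ! m \<le> k \<and> available G n occ (Suc m) k)"
    unfolding parking_outcome_def using occ by simp
  have "p ! m \<le> ?spot (Suc m) \<and> available G n occ (Suc m) (?spot (Suc m))"
    unfolding s by (rule LeastI_ex[OF ex])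
  moreover have "\<forall>k. p ! m \<le> k \<and> k < ?spot (Suc m) \<longrightarrow> \<not> available G n occ (Suc m) k"
    unfolding s using not_less_Least by blast
  ultimately have new: "p ! m \<in> prefs_parking_at G n occ (Suc m) (?spot (Suc m))"
    using Suc.prems(2) by (auto simp: prefs_parking_at_def)
  then have "run G n p (Suc m) = Some (parked ?spot (Suc m))"
    using IH occ by (simp add: park_car_prefs_parking_at)
  moreover have "\<forall>i<Suc m. p ! i \<in> prefs_parking_at G n (parked ?spot i) (Suc i) (?spot (Suc i))"
    using IH new by (auto simp: less_Suc_eq)
  ultimately show ?case by blast
qed simp

lemma FPF_prefs_with_outcome:
  assumes "p \<in> FPF G n"
  shows "p \<in> prefs_with_outcome G n (parking_outcome G n p)"
proof -
  have "\<forall>i<n. 1 \<le> p ! i"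
    using assms by (auto simp: FPF_def dest!: nth_mem)
  then show ?thesis
    using run_parking_outcome[of G n p n] assms by (auto simp: FPF_def prefs_with_outcome_def)
qed

lemma parking_outcome_prefs_with_outcome:
  assumes "p \<in> prefs_with_outcome G n spot" "i \<in> {1..n}"
  shows "parking_outcome G n p i = spot i"
proof -
  obtain j where j: "i = Suc j" "j < n" using assms(2) by (cases i) auto
  have "run G n p j = Some (parked spot j)" using run_prefs_with_outcome[OF assms(1)] j by simp
  moreover have "p ! j \<in> prefs_parking_at G n (parked spot j) (Suc j) (spot (Suc j))"
    using assms j by (auto simp: prefs_with_outcome_def)
  ultimately show ?thesis unfolding parking_outcome_def using j Least_prefs_parking_at by simp
qed

lemma parked_cong: "\<forall>i\<in>{1..m}. spot i = spot' i \<Longrightarrow> parked spot m = parked spot' m"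
  by (induction m) auto

lemma prefs_with_outcome_cong:
  assumes "\<forall>i\<in>{1..n}. spot i = spot' i"
  shows "prefs_with_outcome G n spot = prefs_with_outcome G n spot'"
proof -
  have "parked spot i = parked spot' i \<and> spot (Suc i) = spot' (Suc i)" if "i < n" for i
    using assms that by (intro conjI parked_cong) auto
  then show ?thesis unfolding prefs_with_outcome_def by auto
qed

lemma card_FPF_eq_sum_outcomes:
  fixes F :: "'x \<Rightarrow> nat \<Rightarrow> nat"
  assumes "finite X"
    and cover: "\<And>p. p \<in> FPF G n \<Longrightarrow> \<exists>x\<in>X. \<forall>i\<in>{1..n}. parking_outcome G n p i = F x i"
    and inj: "\<And>x y. x \<in> X \<Longrightarrow> y \<in> X \<Longrightarrow> \<forall>i\<in>{1..n}. F x i = F y i \<Longrightarrow> x = y"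
  shows "card (FPF G n) = (\<Sum>x\<in>X. card (prefs_with_outcome G n (F x)))"
proof -
  have union: "FPF G n = (\<Union>x\<in>X. prefs_with_outcome G n (F x))"
  proof (intro equalityI subsetI)
    fix p assume p: "p \<in> FPF G n"
    then obtain x where "x \<in> X" and "\<forall>i\<in>{1..n}. parking_outcome G n p i = F x i"
      using cover by blast
    then have "prefs_with_outcome G n (parking_outcome G n p) = prefs_with_outcome G n (F x)"
      by (intro prefs_with_outcome_cong)
    then show "p \<in> (\<Union>x\<in>X. prefs_with_outcome G n (F x))"
      using FPF_prefs_with_outcome[OF p] \<open>x \<in> X\<close> by blast
  qed (use prefs_with_outcome_subset_FPF in blast)
  have disjoint: "prefs_with_outcome G n (F x) \<inter> prefs_with_outcome G n (F y) = {}"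
    if "x \<in> X" "y \<in> X" "x \<noteq> y" for x y
  proof (rule ccontr)
    assume "prefs_with_outcome G n (F x) \<inter> prefs_with_outcome G n (F y) \<noteq> {}"
    then obtain p where px: "p \<in> prefs_with_outcome G n (F x)"
      and py: "p \<in> prefs_with_outcome G n (F y)"
      by blast
    have "F x i = F y i" if "i \<in> {1..n}" for i
      using parking_outcome_prefs_with_outcome[OF px that]
        parking_outcome_prefs_with_outcome[OF py that] by simp
    then show False using inj \<open>x \<in> X\<close> \<open>y \<in> X\<close> \<open>x \<noteq> y\<close> by blast
  qed
  have "finite (prefs_with_outcome G n (F x))" for x
    using finite_subset[OF prefs_with_outcome_subset_FPF finite_FPF] .
  then show ?thesis
    unfolding union by (intro card_UN_disjoint) (use \<open>finite X\<close> disjoint in auto)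
qed

lemma card_lists_nth_in:
  assumes "\<And>i. finite (B i)"
  shows "card {p. length p = n \<and> (\<forall>i<n. p ! i \<in> B i)} = (\<Prod>i<n. card (B i))"
proof (induction n)
  case (Suc n)
  let ?L = "{p. length p = n \<and> (\<forall>i<n. p ! i \<in> B i)}"
  let ?snoc = "\<lambda>(xs, x). xs @ [x]"
  have "{p. length p = Suc n \<and> (\<forall>i<Suc n. p ! i \<in> B i)} = ?snoc ` (?L \<times> B n)"
  proof (intro equalityI subsetI)
    fix p assume p: "p \<in> {p. length p = Suc n \<and> (\<forall>i<Suc n. p ! i \<in> B i)}"
    then have "p \<noteq> []" by auto
    then have "p = butlast p @ [last p]" by simp
    moreover have "(butlast p, last p) \<in> ?L \<times> B n"
      using p \<open>p \<noteq> []\<close> by (simp add: nth_butlast last_conv_nth)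
    ultimately show "p \<in> ?snoc ` (?L \<times> B n)" by force
  qed (auto simp: nth_append less_Suc_eq)
  moreover have "inj_on ?snoc (?L \<times> B n)"
    by (rule inj_onI) auto
  ultimately show ?case
    using Suc.IH assms by (simp add: card_image card_cartesian_product)
qed simp

lemma card_prefs_with_outcome:
  "card (prefs_with_outcome G n spot) =
     (\<Prod>i<n. card (prefs_parking_at G n (parked spot i) (Suc i) (spot (Suc i))))"
proof -
  let ?B = "\<lambda>i. if i < n then prefs_parking_at G n (parked spot i) (Suc i) (spot (Suc i)) else {}"
  have "card (prefs_with_outcome G n spot) = card {p. length p = n \<and> (\<forall>i<n. p ! i \<in> ?B i)}"
    unfolding prefs_with_outcome_def by (rule arg_cong[where f = card]) auto
  also have "\<dots> = (\<Prod>i<n. card (?B i))"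
    by (rule card_lists_nth_in) (use finite_subset[OF prefs_parking_at_subset] in simp)
  also have "\<dots> = (\<Prod>i<n. card (prefs_parking_at G n (parked spot i) (Suc i) (spot (Suc i))))"
    by (rule prod.cong) auto
  finally show ?thesis .
qed

definition valid_outcome :: "(nat \<Rightarrow> nat \<Rightarrow> bool) \<Rightarrow> nat \<Rightarrow> (nat \<Rightarrow> nat) \<Rightarrow> bool" where
  "valid_outcome G n spot \<longleftrightarrow> (\<forall>i<n. available G n (parked spot i) (Suc i) (spot (Suc i)))"

lemma prefs_with_outcome_valid: "p \<in> prefs_with_outcome G n spot \<Longrightarrow> valid_outcome G n spot"
  by (auto simp: prefs_with_outcome_def prefs_parking_at_def valid_outcome_def)

lemma parked_eq_None_iff: "parked spot m k = None \<longleftrightarrow> (\<forall>j\<in>{1..m}. spot j \<noteq> k)"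
proof (induction m)
  case (Suc m)
  show ?case
  proof (cases "k = spot (Suc m)")
    case False
    then show ?thesis using Suc.IH by (auto simp: le_Suc_eq)
  qed force
qed simp

lemma parked_spot: "inj_on spot {1..m} \<Longrightarrow> j \<in> {1..m} \<Longrightarrow> parked spot m (spot j) = Some j"
proof (induction m)
  case (Suc m)
  show ?case
  proof (cases "j = Suc m")
    case False
    then have "j \<in> {1..m}" "spot j \<noteq> spot (Suc m)"
      using Suc.prems by (auto simp: inj_on_def)
    moreover have "inj_on spot {1..m}" using Suc.prems(1) by (rule inj_on_subset) auto
    ultimately show ?thesis using Suc.IH by simp
  qed simp
qed simp

lemma valid_outcome_range:
  "valid_outcome G n spot \<Longrightarrow> i \<in> {1..n} \<Longrightarrow> spot i \<in> {1..n}"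
  by (cases i) (auto simp: valid_outcome_def available_def)

lemma valid_outcome_inj:
  assumes "valid_outcome G n spot"
  shows "inj_on spot {1..n}"
proof (rule linorder_inj_onI')
  fix i j :: nat assume ij: "i \<in> {1..n}" "j \<in> {1..n}" "i < j"
  then obtain m where m: "j = Suc m" "m < n" by (cases j) auto
  then have "parked spot m (spot j) = None"
    using assms by (auto simp: valid_outcome_def available_def)
  then show "spot i \<noteq> spot j" using ij m by (auto simp: parked_eq_None_iff)
qed

lemma valid_outcome_bij: "valid_outcome G n spot \<Longrightarrow> bij_betw spot {1..n} {1..n}"
  unfolding bij_betw_def
  using endo_inj_surj[of "{1..n}" spot] valid_outcome_inj valid_outcome_range by blast

lemma valid_outcome_neighbour:
  assumes valid: "valid_outcome G n spot" and ij: "i \<in> {1..n}" "1 \<le> j" "j < i"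
    and nb: "spot j = spot i - 1 \<or> spot j = spot i + 1"
  shows "G i j"
proof -
  obtain m where m: "i = Suc m" "m < n" using ij by (cases i) auto
  have "j \<in> {1..m}" using ij m by auto
  moreover have "inj_on spot {1..m}"
    using valid_outcome_inj[OF valid] by (rule inj_on_subset) (use m in auto)
  ultimately have "parked spot m (spot j) = Some j" by (rule parked_spot[rotated])
  moreover have "spot j \<in> {1..n}" using valid_outcome_range[OF valid] ij by simp
  moreover have "nbr_ok G n (parked spot m) i (spot i - 1) \<and> nbr_ok G n (parked spot m) i (spot i + 1)"
    using valid m by (auto simp: valid_outcome_def available_def)
  ultimately show ?thesis using nb by (auto simp: nbr_ok_def)
qed

lemma valid_outcome_adjacent:
  assumes valid: "valid_outcome G n spot" and sym: "\<And>x y. G x y \<Longrightarrow> G y x"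
    and cd: "c \<in> {1..n}" "d \<in> {1..n}" "spot d = Suc (spot c)"
  shows "G c d"
proof -
  have "c \<noteq> d" using cd by auto
  then consider "c < d" | "d < c" by linarith
  then show ?thesis
  proof cases
    case 1
    then show ?thesis using valid_outcome_neighbour[OF valid, of d c] cd sym by auto
  next
    case 2
    then show ?thesis using valid_outcome_neighbour[OF valid, of c d] cd by auto
  qed
qed

section \<open>Valid outcomes on the cycle\<close>

definition cyc_succ :: "nat \<Rightarrow> nat \<Rightarrow> nat" where
  "cyc_succ n c = (if c = n then 1 else c + 1)"

definition cyc_pred :: "nat \<Rightarrow> nat \<Rightarrow> nat" where
  "cyc_pred n c = (if c = 1 then n else c - 1)"

lemma cycle_graph_iff:
  "n \<ge> 3 \<Longrightarrow> c \<in> {1..n} \<Longrightarrow> d \<in> {1..n} \<Longrightarrow>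
    cycle_graph n c d \<longleftrightarrow> d = cyc_succ n c \<or> d = cyc_pred n c"
  by (auto simp: cycle_graph_def cyc_succ_def cyc_pred_def)

lemma cycle_graph_sym: "cycle_graph n c d \<Longrightarrow> cycle_graph n d c"
  by (auto simp: cycle_graph_def)

lemma cyc_pred_succ: "c \<in> {1..n} \<Longrightarrow> cyc_pred n (cyc_succ n c) = c"
  by (auto simp: cyc_succ_def cyc_pred_def)

lemma cyc_succ_pred: "c \<in> {1..n} \<Longrightarrow> cyc_succ n (cyc_pred n c) = c"
  by (auto simp: cyc_succ_def cyc_pred_def)

text \<open>The two ways of parking the cars around the cycle starting with car a at spot 1: in the
  upward arrangement spot k holds car_inc n a k = a + k - 1 (mod n), in the downward one it holds
  car_dec n a k = a - k + 1 (mod n); spot_inc and spot_dec are the inverse maps.\<close>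

definition car_inc :: "nat \<Rightarrow> nat \<Rightarrow> nat \<Rightarrow> nat" where
  "car_inc n a k = (if k \<le> n - a + 1 then k + a - 1 else k - (n - a + 1))"

definition spot_inc :: "nat \<Rightarrow> nat \<Rightarrow> nat \<Rightarrow> nat" where
  "spot_inc n a c = (if a \<le> c then c - a + 1 else n - a + 1 + c)"

definition car_dec :: "nat \<Rightarrow> nat \<Rightarrow> nat \<Rightarrow> nat" where
  "car_dec n a k = (if k \<le> a then a - k + 1 else a + n - k + 1)"

definition spot_dec :: "nat \<Rightarrow> nat \<Rightarrow> nat \<Rightarrow> nat" where
  "spot_dec n a c = (if c \<le> a then a - c + 1 else a + n - c + 1)"

lemma car_inc_Suc: "a \<in> {1..n} \<Longrightarrow> 1 \<le> k \<Longrightarrow> k < n \<Longrightarrow> car_inc n a (Suc k) = cyc_succ n (car_inc n a k)"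
  by (auto simp: car_inc_def cyc_succ_def)

lemma car_dec_Suc: "a \<in> {1..n} \<Longrightarrow> 1 \<le> k \<Longrightarrow> k < n \<Longrightarrow> car_dec n a (Suc k) = cyc_pred n (car_dec n a k)"
  by (auto simp: car_dec_def cyc_pred_def)

lemma car_inc_1: "a \<in> {1..n} \<Longrightarrow> car_inc n a 1 = a"
  by (auto simp: car_inc_def)

lemma car_dec_1: "a \<in> {1..n} \<Longrightarrow> car_dec n a 1 = a"
  by (auto simp: car_dec_def)

lemma car_inc_range: "a \<in> {1..n} \<Longrightarrow> k \<in> {1..n} \<Longrightarrow> car_inc n a k \<in> {1..n}"
  by (auto simp: car_inc_def)

lemma car_dec_range: "a \<in> {1..n} \<Longrightarrow> k \<in> {1..n} \<Longrightarrow> car_dec n a k \<in> {1..n}"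
  by (auto simp: car_dec_def)

lemma spot_inc_range: "a \<in> {1..n} \<Longrightarrow> c \<in> {1..n} \<Longrightarrow> spot_inc n a c \<in> {1..n}"
  by (auto simp: spot_inc_def)

lemma spot_dec_range: "a \<in> {1..n} \<Longrightarrow> c \<in> {1..n} \<Longrightarrow> spot_dec n a c \<in> {1..n}"
  by (auto simp: spot_dec_def)

lemma spot_inc_car_inc: "a \<in> {1..n} \<Longrightarrow> k \<in> {1..n} \<Longrightarrow> spot_inc n a (car_inc n a k) = k"
  by (auto simp: car_inc_def spot_inc_def)

lemma car_inc_spot_inc: "a \<in> {1..n} \<Longrightarrow> c \<in> {1..n} \<Longrightarrow> car_inc n a (spot_inc n a c) = c"
  by (auto simp: car_inc_def spot_inc_def)

lemma spot_dec_car_dec: "a \<in> {1..n} \<Longrightarrow> k \<in> {1..n} \<Longrightarrow> spot_dec n a (car_dec n a k) = k"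
  by (auto simp: car_dec_def spot_dec_def)

lemma car_dec_spot_dec: "a \<in> {1..n} \<Longrightarrow> c \<in> {1..n} \<Longrightarrow> car_dec n a (spot_dec n a c) = c"
  by (auto simp: car_dec_def spot_dec_def)

lemma injective_walk_keeps_direction:
  assumes range: "\<And>k. k \<in> {1..n} \<Longrightarrow> w k \<in> {1..n}"
    and inj: "inj_on w {1..n}"
    and step: "\<And>k. 1 \<le> k \<Longrightarrow> k < n \<Longrightarrow> w (Suc k) = f (w k) \<or> w (Suc k) = g (w k)"
    and g_f: "\<And>c. c \<in> {1..n} \<Longrightarrow> g (f c) = c"
    and first: "2 \<le> n \<Longrightarrow> w 2 = f (w 1)"
  shows "1 \<le> k \<Longrightarrow> k < n \<Longrightarrow> w (Suc k) = f (w k)"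
proof (induction k rule: nat_induct_at_least)
  case base
  then show ?case using first by (simp add: numeral_2_eq_2)
next
  case (Suc k)
  have IH: "w (Suc k) = f (w k)" using Suc by simp
  have "w (Suc (Suc k)) \<noteq> w k"
  proof
    assume "w (Suc (Suc k)) = w k"
    then have "Suc (Suc k) = k" using inj_onD[OF inj] Suc by simp
    then show False by simp
  qed
  moreover have "g (w (Suc k)) = w k" using IH g_f range Suc by simp
  moreover have "w (Suc (Suc k)) = f (w (Suc k)) \<or> w (Suc (Suc k)) = g (w (Suc k))"
    using Suc.hyps Suc.prems by (intro step) simp_all
  ultimately show ?case by auto
qed

lemma walks_eq:
  assumes "\<And>k. 1 \<le> k \<Longrightarrow> k < n \<Longrightarrow> u (Suc k) = f (u k)"
    and "\<And>k. 1 \<le> k \<Longrightarrow> k < n \<Longrightarrow> v (Suc k) = f (v k)"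
    and "u 1 = v 1"
  shows "1 \<le> k \<Longrightarrow> k \<le> n \<Longrightarrow> u k = v k"
proof (induction k rule: nat_induct_at_least)
  case (Suc k)
  then show ?case using assms by simp
qed (use assms in simp)

lemma cycle_graph_hamiltonian_path:
  assumes n: "n \<ge> 3" and bij: "bij_betw w {1..n} {1..n}"
    and adj: "\<And>k. 1 \<le> k \<Longrightarrow> k < n \<Longrightarrow> cycle_graph n (w k) (w (Suc k))"
  shows "(\<forall>k\<in>{1..n}. w k = car_inc n (w 1) k) \<or> (\<forall>k\<in>{1..n}. w k = car_dec n (w 1) k)"
proof -
  have range: "\<And>k. k \<in> {1..n} \<Longrightarrow> w k \<in> {1..n}" and inj: "inj_on w {1..n}"
    using bij by (auto simp: bij_betw_def)
  have a: "w 1 \<in> {1..n}" using range n by simp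
  have step: "w (Suc k) = cyc_succ n (w k) \<or> w (Suc k) = cyc_pred n (w k)" if "1 \<le> k" "k < n" for k
    using adj[OF that] cycle_graph_iff[OF n] range that by simp
  then have "w 2 = cyc_succ n (w 1) \<or> w 2 = cyc_pred n (w 1)"
    using n by (simp add: numeral_2_eq_2)
  then show ?thesis
  proof
    assume "w 2 = cyc_succ n (w 1)"
    then have succ: "w (Suc k) = cyc_succ n (w k)" if "1 \<le> k" "k < n" for k
      using injective_walk_keeps_direction[OF range inj step cyc_pred_succ] that by blast
    have "w k = car_inc n (w 1) k" if "k \<in> {1..n}" for k
      using that
      by (intro walks_eq[where u = w and v = "car_inc n (w 1)" and f = "cyc_succ n",
            OF succ car_inc_Suc[OF a] car_inc_1[OF a, symmetric]]) auto
    then show ?thesis by blast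
  next
    assume "w 2 = cyc_pred n (w 1)"
    moreover have step': "w (Suc k) = cyc_pred n (w k) \<or> w (Suc k) = cyc_succ n (w k)"
      if "1 \<le> k" "k < n" for k
      using step[OF that] by blast
    ultimately have pred: "w (Suc k) = cyc_pred n (w k)" if "1 \<le> k" "k < n" for k
      using injective_walk_keeps_direction[OF range inj step' cyc_succ_pred] that by blast
    have "w k = car_dec n (w 1) k" if "k \<in> {1..n}" for k
      using that
      by (intro walks_eq[where u = w and v = "car_dec n (w 1)" and f = "cyc_pred n",
            OF pred car_dec_Suc[OF a] car_dec_1[OF a, symmetric]]) auto
    then show ?thesis by blast
  qed
qed

definition cycle_outcome :: "nat \<Rightarrow> nat \<times> bool \<Rightarrow> nat \<Rightarrow> nat" where
  "cycle_outcome n x = (if snd x then spot_inc n (fst x) else spot_dec n (fst x))"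

lemma valid_outcome_cycle_graph:
  assumes n: "n \<ge> 3" and valid: "valid_outcome (cycle_graph n) n spot"
  shows "\<exists>x\<in>{1..n} \<times> UNIV. \<forall>i\<in>{1..n}. spot i = cycle_outcome n x i"
proof -
  have bij: "bij_betw spot {1..n} {1..n}" using valid by (rule valid_outcome_bij)
  define w where "w = the_inv_into {1..n} spot"
  have w_bij: "bij_betw w {1..n} {1..n}"
    unfolding w_def by (rule bij_betw_the_inv_into[OF bij])
  have spot_w: "spot (w k) = k" if "k \<in> {1..n}" for k
    unfolding w_def using f_the_inv_into_f_bij_betw[OF bij] that by blast
  have w_spot: "w (spot i) = i" if "i \<in> {1..n}" for i
    unfolding w_def using the_inv_into_f_f[OF bij_betw_imp_inj_on[OF bij] that] .
  have w_range: "w k \<in> {1..n}" if "k \<in> {1..n}" for k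
    using w_bij that by (auto simp: bij_betw_def)
  have a: "w 1 \<in> {1..n}" using w_range n by simp
  have "cycle_graph n (w k) (w (Suc k))" if "1 \<le> k" "k < n" for k
    using valid_outcome_adjacent[OF valid cycle_graph_sym] w_range spot_w that by simp
  then have "(\<forall>k\<in>{1..n}. w k = car_inc n (w 1) k) \<or> (\<forall>k\<in>{1..n}. w k = car_dec n (w 1) k)"
    by (rule cycle_graph_hamiltonian_path[OF n w_bij])
  moreover have "\<forall>i\<in>{1..n}. spot i = s i"
    if w_eq: "\<forall>k\<in>{1..n}. w k = c k" and s_c: "\<And>k. k \<in> {1..n} \<Longrightarrow> s (c k) = k" for c s
  proof
    fix i assume i: "i \<in> {1..n}"
    then have "spot i \<in> {1..n}" by (rule valid_outcome_range[OF valid])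
    then have "c (spot i) = i" using bspec[OF w_eq] w_spot[OF i] by simp
    then show "spot i = s i" using s_c \<open>spot i \<in> {1..n}\<close> by metis
  qed
  ultimately have "(\<forall>i\<in>{1..n}. spot i = cycle_outcome n (w 1, True) i) \<or>
      (\<forall>i\<in>{1..n}. spot i = cycle_outcome n (w 1, False) i)"
    unfolding cycle_outcome_def using spot_inc_car_inc[OF a] spot_dec_car_dec[OF a] by auto
  then show ?thesis using a by blast
qed

lemma cycle_outcome_inj:
  assumes n: "n \<ge> 3" and xy: "x \<in> {1..n} \<times> UNIV" "y \<in> {1..n} \<times> UNIV"
    and eq: "\<forall>i\<in>{1..n}. cycle_outcome n x i = cycle_outcome n y i"
  shows "x = y"
proof -
  obtain a d b e where x: "x = (a, d)" and y: "y = (b, e)" by fastforce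
  have a: "a \<in> {1..n}" and b: "b \<in> {1..n}" using xy x y by auto
  have "cycle_outcome n (a, d) a = 1"
    by (simp add: cycle_outcome_def spot_inc_def spot_dec_def)
  then have "cycle_outcome n (b, e) a = 1" using eq a x y by simp
  then have ab: "a = b"
    using a b by (auto simp: cycle_outcome_def spot_inc_def spot_dec_def split: if_splits)
  have "spot_inc n a (cyc_succ n a) = 2" "spot_dec n a (cyc_succ n a) = n"
    using a n by (auto simp: spot_inc_def spot_dec_def cyc_succ_def)
  moreover have "cycle_outcome n (a, d) (cyc_succ n a) = cycle_outcome n (a, e) (cyc_succ n a)"
    using eq x y ab a by (auto simp: cyc_succ_def)
  ultimately have "d = e"
    using n by (cases d; cases e) (auto simp: cycle_outcome_def)
  then show ?thesis using x y ab by simp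
qed

section \<open>Counting the preferences with a given outcome\<close>

definition arranged :: "nat \<Rightarrow> (nat \<Rightarrow> nat) \<Rightarrow> nat \<Rightarrow> nat \<Rightarrow> nat option" where
  "arranged n w m = (\<lambda>k. if k \<in> {1..n} \<and> w k \<le> m then Some (w k) else None)"

lemma parked_eq_arranged:
  assumes spot_w: "\<And>i. i \<in> {1..n} \<Longrightarrow> spot i \<in> {1..n} \<and> w (spot i) = i"
    and w_spot: "\<And>k. k \<in> {1..n} \<Longrightarrow> w k \<in> {1..n} \<and> spot (w k) = k"
  shows "m \<le> n \<Longrightarrow> parked spot m = arranged n w m"
proof (induction m)
  case 0
  have "\<not> w k \<le> 0" if "k \<in> {1..n}" for k using w_spot[OF that] by simp
  then show ?case by (auto simp: arranged_def)
next
  case (Suc m)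
  have "parked spot (Suc m) k = arranged n w (Suc m) k" for k
  proof (cases "k = spot (Suc m)")
    case True
    then have "k \<in> {1..n} \<and> w k = Suc m" using spot_w Suc.prems by simp
    then show ?thesis using True by (simp add: arranged_def)
  next
    case False
    then have "k \<in> {1..n} \<Longrightarrow> w k \<noteq> Suc m" using w_spot by metis
    then have "arranged n w (Suc m) k = arranged n w m k" by (auto simp: arranged_def)
    then show ?thesis using False Suc by simp
  qed
  then show ?case by blast
qed

lemma available_arranged_iff:
  "available G n (arranged n w m) i k \<longleftrightarrow>
     k \<in> {1..n} \<and> \<not> w k \<le> m \<and>
     (k = 1 \<or> \<not> w (k - 1) \<le> m \<or> G i (w (k - 1))) \<and>
     (k = n \<or> \<not> w (k + 1) \<le> m \<or> G i (w (k + 1)))"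
  by (auto simp: available_def nbr_ok_def arranged_def)

lemma card_prefs_parking_at:
  assumes "available G n occ i s" "1 \<le> lo" "lo \<le> s"
    and "\<And>k. lo \<le> k \<Longrightarrow> k < s \<Longrightarrow> \<not> available G n occ i k"
    and "lo = 1 \<or> available G n occ i (lo - 1)"
  shows "card (prefs_parking_at G n occ i s) = s + 1 - lo"
proof -
  have "prefs_parking_at G n occ i s = {lo..s}"
  proof (intro equalityI subsetI)
    fix a assume a: "a \<in> prefs_parking_at G n occ i s"
    have "lo \<le> a"
    proof (rule ccontr)
      assume "\<not> lo \<le> a"
      then have "lo \<noteq> 1" "a \<le> lo - 1" "lo - 1 < s" using a assms(3) by (auto simp: prefs_parking_at_def)
      then show False using a assms(5) by (auto simp: prefs_parking_at_def)
    qed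
    then show "a \<in> {lo..s}" using a by (auto simp: prefs_parking_at_def)
  qed (use assms in \<open>auto simp: prefs_parking_at_def\<close>)
  then show ?thesis by simp
qed

lemma card_prefs_with_outcome_arranged:
  assumes spot_w: "\<And>i. i \<in> {1..n} \<Longrightarrow> spot i \<in> {1..n} \<and> w (spot i) = i"
    and w_spot: "\<And>k. k \<in> {1..n} \<Longrightarrow> w k \<in> {1..n} \<and> spot (w k) = k"
    and weight: "\<And>c. c \<in> {1..n} \<Longrightarrow>
      card (prefs_parking_at G n (arranged n w (c - 1)) c (spot c)) = f c"
  shows "card (prefs_with_outcome G n spot) = (\<Prod>c\<in>{1..n}. f c)"
proof -
  have "card (prefs_with_outcome G n spot) =
      (\<Prod>i<n. card (prefs_parking_at G n (parked spot i) (Suc i) (spot (Suc i))))"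
    by (rule card_prefs_with_outcome)
  also have "\<dots> = (\<Prod>i<n. f (Suc i))"
  proof (rule prod.cong)
    fix i assume "i \<in> {..<n}"
    then show "card (prefs_parking_at G n (parked spot i) (Suc i) (spot (Suc i))) = f (Suc i)"
      using parked_eq_arranged[OF spot_w w_spot, of i] weight[of "Suc i"] by simp
  qed simp
  also have "\<dots> = (\<Prod>c\<in>{1..n}. f c)"
    using prod.atLeast1_atMost_eq[of f n] by simp
  finally show ?thesis .
qed

lemma available_own_spot:
  assumes sym: "\<And>x y. G x y \<Longrightarrow> G y x"
    and adj: "\<And>k. 1 \<le> k \<Longrightarrow> k < n \<Longrightarrow> G (w k) (w (Suc k))"
    and s: "s \<in> {1..n}" "1 \<le> w s"
  shows "available G n (arranged n w (w s - 1)) (w s) s"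
  unfolding available_arranged_iff
proof (intro conjI)
  show "s = 1 \<or> \<not> w (s - 1) \<le> w s - 1 \<or> G (w s) (w (s - 1))"
    using adj[of "s - 1"] sym s by (cases "s = 1") auto
  show "s = n \<or> \<not> w (s + 1) \<le> w s - 1 \<or> G (w s) (w (s + 1))"
    using adj[of s] s by (cases "s = n") auto
qed (use s in auto)

lemma card_prefs_parking_at_occupied_below:
  assumes "available G n occ i s" "1 \<le> s" "\<And>k. 1 \<le> k \<Longrightarrow> k < s \<Longrightarrow> occ k \<noteq> None"
  shows "card (prefs_parking_at G n occ i s) = s"
  using card_prefs_parking_at[of G n occ i s 1] assms by (auto simp: available_def)

lemma card_prefs_parking_at_prev_available:
  assumes "available G n occ i s" "s = 1 \<or> available G n occ i (s - 1)"
  shows "card (prefs_parking_at G n occ i s) = 1"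
  using card_prefs_parking_at[of G n occ i s s] assms by (auto simp: available_def)

lemma cycle_graph_cyc_succ: "c \<in> {1..n} \<Longrightarrow> cycle_graph n c (cyc_succ n c)"
  by (auto simp: cycle_graph_def cyc_succ_def)

lemma cycle_graph_cyc_pred: "c \<in> {1..n} \<Longrightarrow> cycle_graph n c (cyc_pred n c)"
  by (auto simp: cycle_graph_def cyc_pred_def)

lemma available_spot_inc:
  assumes "a \<in> {1..n}" "c \<in> {1..n}"
  shows "available (cycle_graph n) n (arranged n (car_inc n a) (c - 1)) c (spot_inc n a c)"
proof -
  have "cycle_graph n (car_inc n a k) (car_inc n a (Suc k))" if "1 \<le> k" "k < n" for k
    using that assms car_inc_Suc[of a n k] cycle_graph_cyc_succ car_inc_range by simp
  then have "available (cycle_graph n) n (arranged n (car_inc n a) (car_inc n a (spot_inc n a c) - 1))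
      (car_inc n a (spot_inc n a c)) (spot_inc n a c)"
    by (intro available_own_spot[OF cycle_graph_sym])
      (use assms spot_inc_range car_inc_spot_inc in auto)
  then show ?thesis using car_inc_spot_inc assms by simp
qed

lemma available_spot_dec:
  assumes "a \<in> {1..n}" "c \<in> {1..n}"
  shows "available (cycle_graph n) n (arranged n (car_dec n a) (c - 1)) c (spot_dec n a c)"
proof -
  have "cycle_graph n (car_dec n a k) (car_dec n a (Suc k))" if "1 \<le> k" "k < n" for k
    using that assms car_dec_Suc[of a n k] cycle_graph_cyc_pred car_dec_range by simp
  then have "available (cycle_graph n) n (arranged n (car_dec n a) (car_dec n a (spot_dec n a c) - 1))
      (car_dec n a (spot_dec n a c)) (spot_dec n a c)"
    by (intro available_own_spot[OF cycle_graph_sym])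
      (use assms spot_dec_range car_dec_spot_dec in auto)
  then show ?thesis using car_dec_spot_dec assms by simp
qed

definition weight_wrapped :: "nat \<Rightarrow> nat" where
  "weight_wrapped c = (if c \<le> 2 then c else c + 1)"

definition weight_inc :: "nat \<Rightarrow> nat \<Rightarrow> nat" where
  "weight_inc a c = (if a \<le> c then c - a + 1 else weight_wrapped c)"

lemma card_prefs_parking_inc_started:
  assumes a: "a \<in> {1..n}" and c: "c \<in> {1..n}" and "a \<le> c"
  shows "card (prefs_parking_at (cycle_graph n) n (arranged n (car_inc n a) (c - 1)) c (spot_inc n a c))
    = c - a + 1"
proof -
  let ?occ = "arranged n (car_inc n a) (c - 1)"
  have "?occ k \<noteq> None" if "1 \<le> k" "k < spot_inc n a c" for k
    using that \<open>a \<le> c\<close> a c by (auto simp: arranged_def car_inc_def spot_inc_def)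
  then show ?thesis
    using card_prefs_parking_at_occupied_below[OF available_spot_inc[OF a c]] \<open>a \<le> c\<close>
    by (simp add: spot_inc_def)
qed

lemma card_prefs_parking_inc_wrapped:
  assumes n: "n \<ge> 4" and a: "a \<in> {1..n}" and c: "c \<in> {1..n}" and "c < a"
  shows "card (prefs_parking_at (cycle_graph n) n (arranged n (car_inc n a) (c - 1)) c (spot_inc n a c))
    = weight_wrapped c"
proof -
  let ?occ = "arranged n (car_inc n a) (c - 1)"
  let ?A = "available (cycle_graph n) n ?occ c"
  let ?s = "spot_inc n a c"
  have s: "?A ?s" using a c by (rule available_spot_inc)
  consider "c = 1" | "c = 2" | "c \<ge> 3" using c by fastforce
  then show ?thesis
  proof cases
    case 1
    have "?A (?s - 1)"
      unfolding available_arranged_iff using 1 \<open>c < a\<close> n a by (auto simp: car_inc_def spot_inc_def)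
    then show ?thesis
      using card_prefs_parking_at_prev_available[OF s] 1 by (simp add: weight_wrapped_def)
  next
    case 2
    have "card (prefs_parking_at (cycle_graph n) n ?occ c ?s) = ?s + 1 - (?s - 1)"
    proof (rule card_prefs_parking_at[OF s])
      show "1 \<le> ?s - 1" using 2 \<open>c < a\<close> a by (simp add: spot_inc_def)
      fix k assume "?s - 1 \<le> k" "k < ?s"
      then show "\<not> ?A k"
        unfolding available_arranged_iff using 2 \<open>c < a\<close> n a by (auto simp: car_inc_def spot_inc_def)
    next
      show "?s - 1 = 1 \<or> ?A (?s - 1 - 1)"
        unfolding available_arranged_iff using 2 \<open>c < a\<close> n a
        by (auto simp: car_inc_def spot_inc_def cycle_graph_def)
    qed simp
    then show ?thesis using 2 \<open>c < a\<close> by (simp add: weight_wrapped_def spot_inc_def)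
  next
    case 3
    \<comment> \<open>Spot n - a + 1 is free, but its right neighbour holds car 1, which is not adjacent to c.\<close>
    have "card (prefs_parking_at (cycle_graph n) n ?occ c ?s) = ?s + 1 - (n - a + 1)"
    proof (rule card_prefs_parking_at[OF s])
      show "n - a + 1 \<le> ?s" using \<open>c < a\<close> by (simp add: spot_inc_def)
      fix k assume k: "n - a + 1 \<le> k" "k < ?s"
      show "\<not> ?A k"
      proof (cases "k = n - a + 1")
        case True
        then have "car_inc n a (k + 1) = 1" "k \<noteq> n" using 3 \<open>c < a\<close> a by (auto simp: car_inc_def)
        moreover have "\<not> cycle_graph n c 1" using 3 \<open>c < a\<close> a c by (auto simp: cycle_graph_def)
        ultimately show ?thesis unfolding available_arranged_iff using 3 by auto
      next
        case False
        then show ?thesis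
          unfolding available_arranged_iff using k \<open>c < a\<close> by (auto simp: car_inc_def spot_inc_def)
      qed
    next
      show "n - a + 1 = 1 \<or> ?A (n - a + 1 - 1)"
        unfolding available_arranged_iff using \<open>c < a\<close> n a by (auto simp: car_inc_def spot_inc_def)
    qed simp
    then show ?thesis using 3 \<open>c < a\<close> a by (simp add: weight_wrapped_def spot_inc_def)
  qed
qed

lemma card_prefs_parking_inc:
  assumes "n \<ge> 4" "a \<in> {1..n}" "c \<in> {1..n}"
  shows "card (prefs_parking_at (cycle_graph n) n (arranged n (car_inc n a) (c - 1)) c (spot_inc n a c))
    = weight_inc a c"
  using card_prefs_parking_inc_started[OF assms(2,3)] card_prefs_parking_inc_wrapped[OF assms]
  by (cases "a \<le> c") (simp_all add: weight_inc_def)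

definition weight_dec :: "nat \<Rightarrow> nat \<Rightarrow> nat \<Rightarrow> nat" where
  "weight_dec n a c = (if c \<le> a then 1 else if c = n - 1 then a + 2 else if c = n then a + 1 else 1)"

lemma card_prefs_parking_dec_early:
  assumes a: "a \<in> {1..n}" and c: "c \<in> {1..n}" and "c \<le> a \<or> c \<le> n - 2"
  shows "card (prefs_parking_at (cycle_graph n) n (arranged n (car_dec n a) (c - 1)) c (spot_dec n a c))
    = 1"
proof -
  let ?A = "available (cycle_graph n) n (arranged n (car_dec n a) (c - 1)) c"
  let ?s = "spot_dec n a c"
  have "?s = 1 \<or> ?A (?s - 1)"
  proof (cases "c = a")
    case False
    \<comment> \<open>Spot s - 1 and its left neighbour are reserved for cars c + 1 and c + 2.\<close>
    have "?s \<noteq> 0" by (simp add: spot_dec_def)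
    then obtain k where k: "?s = Suc k" using not0_implies_Suc by blast
    have "car_dec n a k = c + 1" "k \<noteq> 1 \<Longrightarrow> car_dec n a (k - 1) = c + 2"
      "car_dec n a (k + 1) = c" "1 \<le> k" "k < n"
      using assms False k by (auto simp: car_dec_def spot_dec_def split: if_splits)
    then show ?thesis unfolding k available_arranged_iff using c by (cases "k = 1") auto
  qed (simp add: spot_dec_def)
  then show ?thesis by (rule card_prefs_parking_at_prev_available[OF available_spot_dec[OF a c]])
qed

lemma card_prefs_parking_dec_late:
  assumes n: "n \<ge> 4" and a: "a \<in> {1..n}" and c: "c \<in> {1..n}" and "a < c" "n - 1 \<le> c"
  shows "card (prefs_parking_at (cycle_graph n) n (arranged n (car_dec n a) (c - 1)) c (spot_dec n a c))
    = spot_dec n a c"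
proof -
  let ?A = "available (cycle_graph n) n (arranged n (car_dec n a) (c - 1)) c"
  have "card (prefs_parking_at (cycle_graph n) n (arranged n (car_dec n a) (c - 1)) c (spot_dec n a c))
    = spot_dec n a c + 1 - 1"
  proof (rule card_prefs_parking_at)
    show "?A (spot_dec n a c)" using a c by (rule available_spot_dec)
    fix k assume k: "1 \<le> k" "k < spot_dec n a c"
    show "\<not> ?A k"
    proof (cases "k \<le> a")
      case True
      then show ?thesis unfolding available_arranged_iff using \<open>a < c\<close> by (auto simp: car_dec_def)
    next
      case False
      \<comment> \<open>Then c = n - 1 and k = a + 1, whose left neighbour holds car 1, not adjacent to n - 1.\<close>
      then have "k = a + 1" "c = n - 1" using k assms by (auto simp: spot_dec_def)
      moreover have "\<not> cycle_graph n (n - 1) 1" using n by (auto simp: cycle_graph_def)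
      ultimately show ?thesis unfolding available_arranged_iff using n a by (auto simp: car_dec_def)
    qed
  qed (auto simp: spot_dec_def)
  then show ?thesis by simp
qed

lemma card_prefs_parking_dec:
  assumes "n \<ge> 4" "a \<in> {1..n}" "c \<in> {1..n}"
  shows "card (prefs_parking_at (cycle_graph n) n (arranged n (car_dec n a) (c - 1)) c (spot_dec n a c))
    = weight_dec n a c"
proof (cases "c \<le> a \<or> c \<le> n - 2")
  case True
  then show ?thesis using card_prefs_parking_dec_early[OF assms(2,3)] by (auto simp: weight_dec_def)
next
  case False
  then show ?thesis using card_prefs_parking_dec_late[OF assms] assms
    by (auto simp: weight_dec_def spot_dec_def)
qed

lemma card_prefs_with_outcome_inc:
  assumes "n \<ge> 4" "a \<in> {1..n}"
  shows "card (prefs_with_outcome (cycle_graph n) n (spot_inc n a)) = (\<Prod>c\<in>{1..n}. weight_inc a c)"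
  by (rule card_prefs_with_outcome_arranged[where w = "car_inc n a"])
    (use assms spot_inc_range car_inc_spot_inc car_inc_range spot_inc_car_inc
      card_prefs_parking_inc in auto)

lemma card_prefs_with_outcome_dec:
  assumes "n \<ge> 4" "a \<in> {1..n}"
  shows "card (prefs_with_outcome (cycle_graph n) n (spot_dec n a)) = (\<Prod>c\<in>{1..n}. weight_dec n a c)"
  by (rule card_prefs_with_outcome_arranged[where w = "car_dec n a"])
    (use assms spot_dec_range car_dec_spot_dec car_dec_range spot_dec_car_dec
      card_prefs_parking_dec in auto)

lemma card_FPF_cycle_graph:
  assumes n: "n \<ge> 4"
  shows "card (FPF (cycle_graph n) n) =
    (\<Sum>a\<in>{1..n}. (\<Prod>c\<in>{1..n}. weight_inc a c) + (\<Prod>c\<in>{1..n}. weight_dec n a c))"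
proof -
  let ?G = "cycle_graph n"
  have "card (FPF ?G n) = (\<Sum>x\<in>{1..n} \<times> UNIV. card (prefs_with_outcome ?G n (cycle_outcome n x)))"
  proof (rule card_FPF_eq_sum_outcomes)
    fix p assume "p \<in> FPF ?G n"
    then have "valid_outcome ?G n (parking_outcome ?G n p)"
      using FPF_prefs_with_outcome prefs_with_outcome_valid by blast
    then show "\<exists>x\<in>{1..n} \<times> UNIV. \<forall>i\<in>{1..n}. parking_outcome ?G n p i = cycle_outcome n x i"
      using valid_outcome_cycle_graph n by simp
  next
    fix x y assume "x \<in> {1..n} \<times> UNIV" "y \<in> {1..n} \<times> UNIV"
      "\<forall>i\<in>{1..n}. cycle_outcome n x i = cycle_outcome n y i"
    moreover have "n \<ge> 3" using n by simp
    ultimately show "x = y" using cycle_outcome_inj by blast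
  qed simp
  also have "\<dots> = (\<Sum>a\<in>{1..n}. \<Sum>b\<in>UNIV. card (prefs_with_outcome ?G n (cycle_outcome n (a, b))))"
    unfolding sum.cartesian_product by (simp add: case_prod_unfold)
  also have "\<dots> = (\<Sum>a\<in>{1..n}. card (prefs_with_outcome ?G n (spot_inc n a))
      + card (prefs_with_outcome ?G n (spot_dec n a)))"
    by (simp add: UNIV_bool cycle_outcome_def add.commute)
  also have "\<dots> = (\<Sum>a\<in>{1..n}. (\<Prod>c\<in>{1..n}. weight_inc a c) + (\<Prod>c\<in>{1..n}. weight_dec n a c))"
    using card_prefs_with_outcome_inc[OF n] card_prefs_with_outcome_dec[OF n] by simp
  finally show ?thesis .
qed

section \<open>The closed formula\<close>

lemma prod_weight_wrapped: "m \<ge> 2 \<Longrightarrow> 3 * (\<Prod>c\<in>{1..m}. weight_wrapped c) = fact (m + 1)"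
proof (induction m rule: nat_induct_at_least)
  case base
  have "{1..2::nat} = {1, 2}" by auto
  then show ?case by (simp add: weight_wrapped_def fact_numeral)
next
  case (Suc m)
  have "3 * (\<Prod>c\<in>{1..Suc m}. weight_wrapped c)
      = 3 * (\<Prod>c\<in>{1..m}. weight_wrapped c) * weight_wrapped (Suc m)"
    by simp
  also have "\<dots> = fact (m + 1) * (m + 2)" using Suc by (simp add: weight_wrapped_def)
  also have "\<dots> = fact (Suc m + 1)" by (simp add: algebra_simps)
  finally show ?case .
qed

lemma prod_weight_inc:
  assumes "a \<ge> 1"
  shows "m \<ge> a - 1 \<Longrightarrow>
    (\<Prod>c\<in>{1..m}. weight_inc a c) = (\<Prod>c\<in>{1..a - 1}. weight_wrapped c) * fact (m + 1 - a)"
proof (induction m rule: nat_induct_at_least)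
  case base
  have "(\<Prod>c\<in>{1..a - 1}. weight_inc a c) = (\<Prod>c\<in>{1..a - 1}. weight_wrapped c)"
    by (rule prod.cong) (auto simp: weight_inc_def)
  then show ?case using assms by simp
next
  case (Suc m)
  let ?W = "\<Prod>c\<in>{1..a - 1}. weight_wrapped c"
  have "(\<Prod>c\<in>{1..Suc m}. weight_inc a c) = (\<Prod>c\<in>{1..m}. weight_inc a c) * weight_inc a (Suc m)"
    by simp
  also have "weight_inc a (Suc m) = Suc (m + 1 - a)" using Suc.hyps assms by (auto simp: weight_inc_def)
  also have "(\<Prod>c\<in>{1..m}. weight_inc a c) = ?W * fact (m + 1 - a)" by (rule Suc.IH)
  also have "?W * fact (m + 1 - a) * Suc (m + 1 - a) = ?W * fact (Suc (m + 1 - a))"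
    by (simp add: algebra_simps)
  also have "Suc (m + 1 - a) = Suc m + 1 - a" using Suc.hyps assms by simp
  finally show ?case .
qed

lemma prod_weight_inc_small:
  assumes "a \<in> {1..3}" "n \<ge> 4"
  shows "(\<Prod>c\<in>{1..n}. weight_inc a c) = fact (n + 1 - a) * fact (a - 1)"
proof -
  have "1 \<le> a" "a - 1 \<le> n" using assms by auto
  then have "(\<Prod>c\<in>{1..n}. weight_inc a c) = (\<Prod>c\<in>{1..a - 1}. weight_wrapped c) * fact (n + 1 - a)"
    by (rule prod_weight_inc)
  moreover have "a = 1 \<or> a = 2 \<or> a = 3" "{1..2::nat} = {1, 2}" using assms by auto
  then have "(\<Prod>c\<in>{1..a - 1}. weight_wrapped c) = fact (a - 1)"
    by (auto simp: weight_wrapped_def fact_numeral)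
  ultimately show ?thesis by (simp only: mult.commute)
qed

lemma prod_weight_inc_large:
  assumes "a \<in> {4..n}"
  shows "3 * (\<Prod>c\<in>{1..n}. weight_inc a c) = fact (n - a + 1) * fact a"
proof -
  have "1 \<le> a" "a - 1 \<le> n" using assms by auto
  then have "(\<Prod>c\<in>{1..n}. weight_inc a c) = (\<Prod>c\<in>{1..a - 1}. weight_wrapped c) * fact (n + 1 - a)"
    by (rule prod_weight_inc)
  then have "3 * (\<Prod>c\<in>{1..n}. weight_inc a c)
      = 3 * (\<Prod>c\<in>{1..a - 1}. weight_wrapped c) * fact (n + 1 - a)"
    by (simp only: mult.assoc)
  also have "3 * (\<Prod>c\<in>{1..a - 1}. weight_wrapped c) = fact a"
    using prod_weight_wrapped[of "a - 1"] \<open>1 \<le> a\<close> assms by force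
  also have "n + 1 - a = n - a + 1" using assms by (simp add: Suc_diff_le)
  finally show ?thesis by (simp only: mult.commute)
qed

lemma prod_weight_dec:
  assumes n: "n \<ge> 4" and a: "a \<in> {1..n}"
  shows "(\<Prod>c\<in>{1..n}. weight_dec n a c) =
    (if a \<le> n - 2 then (a + 1) * (a + 2) else if a = n - 1 then n else 1)"
proof -
  define m where "m = n - 2"
  have m: "n = Suc (Suc m)" using n unfolding m_def by simp
  have "(\<Prod>c\<in>{1..m}. weight_dec n a c) = 1"
    by (rule prod.neutral) (use m in \<open>auto simp: weight_dec_def\<close>)
  then have prod: "(\<Prod>c\<in>{1..n}. weight_dec n a c) = weight_dec n a (n - 1) * weight_dec n a n"
    unfolding m by simp
  consider "a \<le> n - 2" | "a = n - 1" | "a = n" using a by fastforce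
  then show ?thesis
  proof cases
    case 1
    then have "weight_dec n a (n - 1) = a + 2" "weight_dec n a n = a + 1"
      using n by (auto simp: weight_dec_def)
    then show ?thesis using 1 prod by simp
  qed (use n prod in \<open>auto simp: weight_dec_def\<close>)
qed

lemma sum_prod_weight_inc:
  assumes n: "n \<ge> 4"
  shows "(\<Sum>a\<in>{1..n}. real (\<Prod>c\<in>{1..n}. weight_inc a c)) =
    (\<Sum>i=1..3. real (fact (n + 1 - i) * fact (i - 1))) + (\<Sum>i=4..n. real (fact (n - i + 1) * fact i) / 3)"
proof -
  let ?f = "\<lambda>a. real (\<Prod>c\<in>{1..n}. weight_inc a c)"
  have "{1..n} = {1..3 + (n - 3)}" "{3 + 1..3 + (n - 3)} = {4..n}" using n by simp_all
  then have "(\<Sum>a\<in>{1..n}. ?f a) = (\<Sum>a\<in>{1..3}. ?f a) + (\<Sum>a\<in>{4..n}. ?f a)"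
    using sum.ub_add_nat[of 1 3 ?f "n - 3"] by simp
  also have "(\<Sum>a\<in>{1..3}. ?f a) = (\<Sum>i=1..3. real (fact (n + 1 - i) * fact (i - 1)))"
    by (rule sum.cong) (use prod_weight_inc_small n in auto)
  also have "(\<Sum>a\<in>{4..n}. ?f a) = (\<Sum>i=4..n. real (fact (n - i + 1) * fact i) / 3)"
  proof (rule sum.cong)
    fix a assume "a \<in> {4..n}"
    then have "real (3 * (\<Prod>c\<in>{1..n}. weight_inc a c)) = real (fact (n - a + 1) * fact a)"
      by (simp only: prod_weight_inc_large)
    then show "?f a = real (fact (n - a + 1) * fact a) / 3" by simp
  qed simp
  finally show ?thesis .
qed

lemma sum_prod_weight_dec:
  assumes n: "n \<ge> 4"
  shows "(\<Sum>a\<in>{1..n}. real (\<Prod>c\<in>{1..n}. weight_dec n a c)) =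
    real (n + 1) + (\<Sum>i=1..n-2. real ((i + 1) * (i + 2)))"
proof -
  obtain m where m: "n = Suc (Suc m)" using n by (cases n; cases "n - 1") auto
  let ?f = "\<lambda>a. real (\<Prod>c\<in>{1..n}. weight_dec n a c)"
  have last: "\<not> n - 1 \<le> n - 2" "\<not> n \<le> n - 2" "n \<noteq> n - 1" "n - 1 \<in> {1..n}" "n \<in> {1..n}"
    using n by auto
  have "(\<Sum>a\<in>{1..n}. ?f a) = (\<Sum>a\<in>{1..m}. ?f a) + ?f (n - 1) + ?f n"
    by (simp add: m)
  also have "(\<Sum>a\<in>{1..m}. ?f a) = (\<Sum>i=1..n-2. real ((i + 1) * (i + 2)))"
    by (rule sum.cong) (use prod_weight_dec[OF n] m in auto)
  also have "?f (n - 1) = real n" using prod_weight_dec[OF n, of "n - 1"] last by simp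
  also have "?f n = 1" using prod_weight_dec[OF n, of n] last by simp
  finally show ?thesis by simp
qed

theorem theorem2p10:
  fixes n :: nat
  assumes "n \<ge> 4"
  shows "real (card (FPF (cycle_graph n) n)) =
    real (n + 1) + (\<Sum>i=1..n-2. real ((i + 1) * (i + 2)))
    + (\<Sum>i=1..3. real (fact (n + 1 - i) * fact (i - 1)))
    + (\<Sum>i=4..n. real (fact (n - i + 1) * fact i) / 3)"
proof -
  have "real (card (FPF (cycle_graph n) n)) =
      (\<Sum>a\<in>{1..n}. real (\<Prod>c\<in>{1..n}. weight_inc a c))
      + (\<Sum>a\<in>{1..n}. real (\<Prod>c\<in>{1..n}. weight_dec n a c))"
    unfolding card_FPF_cycle_graph[OF assms] by (simp add: sum.distrib)
  then show ?thesis using sum_prod_weight_inc[OF assms] sum_prod_weight_dec[OF assms] by simp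
qed

end
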